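(* Let $m\in(0,1)$ and let $(\alpha_i)_{i\ge1}$ be a sequence in $(0,1)$. For $n\ge2$ put $\hat\alpha_n:=n\big(1-(\sum_{i=1}^n\frac1{n-\alpha_i})^{-1}\big)$ and suppose $\hat\alpha_\infty:=\lim_{n\to\infty}\hat\alpha_n$ exists and is positive. For $n\ge2$ and $1\le i\le n$ define the curved interior equilibrium quantities $$\bar x_n^*=1-\frac{nm}{n-1}\Big(\frac1{\hat\alpha_n}-1\Big),\quad x_{i,n}^*=\frac{(n-1)\alpha_i-n(1-\alpha_i)(m-\bar x_n^* )}{n-\alpha_i},\quad G_{i,n}^*=x_{i,n}^*+m-\bar x_n^*,\quad L_{i,n}^*=1-x_{i,n}^*.$$ Then, for each fixed $i$, as $n\to\infty$: $\bar x_n^*\to 1-m\big(\frac1{\hat\alpha_\infty}-1\big)$; $x_{i,n}^*\to \alpha_i-(1-\alpha_i)\big(\frac m{\hat\alpha_\infty}-1\big)$; $\frac{L^*_{i,n}}{1-\alpha_i}\to\frac m{\hat\alpha_\infty}$; and $\frac{G^*_{i,n}}{\alpha_i}\to\frac m{\hat\alpha_\infty}$.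
   Context: These quantities are the average effort, individual efforts, curved grades and leisure in a curved pure Nash equilibrium with all efforts positive of the $n$-student curved-exam game, in which student $i$ has ability $\alpha_i$, chooses effort $x_i\in[0,1]$, receives grade $x_i+\max(m-\bar x,0)$ with $\bar x$ the class mean effort, and has payoff $G_i^{\alpha_i}(1-x_i)^{1-\alpha_i}$. *)

theory Defs
  imports "HOL-Analysis.Analysis"
begin

text \<open>Students are indexed 1, 2, ...; alpha i is the ability of student i.\<close>

definition alpha_hat :: "(nat \<Rightarrow> real) \<Rightarrow> nat \<Rightarrow> real" where
  "alpha_hat \<alpha> n = real n * (1 - 1 / (\<Sum>i=1..n. 1 / (real n - \<alpha> i)))"

definition xbar_star :: "real \<Rightarrow> (nat \<Rightarrow> real) \<Rightarrow> nat \<Rightarrow> real" where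
  "xbar_star m \<alpha> n = 1 - real n * m / (real n - 1) * (1 / alpha_hat \<alpha> n - 1)"

definition x_star :: "real \<Rightarrow> (nat \<Rightarrow> real) \<Rightarrow> nat \<Rightarrow> nat \<Rightarrow> real" where
  "x_star m \<alpha> i n = ((real n - 1) * \<alpha> i - real n * (1 - \<alpha> i) * (m - xbar_star m \<alpha> n))
      / (real n - \<alpha> i)"

definition G_star :: "real \<Rightarrow> (nat \<Rightarrow> real) \<Rightarrow> nat \<Rightarrow> nat \<Rightarrow> real" where
  "G_star m \<alpha> i n = x_star m \<alpha> i n + m - xbar_star m \<alpha> n"

definition L_star :: "real \<Rightarrow> (nat \<Rightarrow> real) \<Rightarrow> nat \<Rightarrow> nat \<Rightarrow> real" where
  "L_star m \<alpha> i n = 1 - x_star m \<alpha> i n"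

end

theory Submission
  imports Defs "HOL-Real_Asymp.Real_Asymp"
begin

lemma tendsto_xbar_star:
  assumes "alpha_hat \<alpha> \<longlonglongrightarrow> a" and "a \<noteq> 0"
  shows "xbar_star m \<alpha> \<longlonglongrightarrow> 1 - m * (1 / a - 1)"
proof -
  have "(\<lambda>n. real n * m / (real n - 1)) \<longlonglongrightarrow> m"
    by real_asymp
  then show ?thesis
    unfolding xbar_star_def[abs_def] using assms by (intro tendsto_intros) auto
qed

lemma tendsto_x_star:
  assumes "xbar_star m \<alpha> \<longlonglongrightarrow> xb"
  shows "x_star m \<alpha> i \<longlonglongrightarrow> \<alpha> i - (1 - \<alpha> i) * (m - xb)"
proof -
  have "(\<lambda>n. (real n - 1) / (real n - \<alpha> i)) \<longlonglongrightarrow> 1"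
    and "(\<lambda>n. real n / (real n - \<alpha> i)) \<longlonglongrightarrow> 1"
    by real_asymp+
  then have "(\<lambda>n. (real n - 1) / (real n - \<alpha> i) * \<alpha> i
      - real n / (real n - \<alpha> i) * (1 - \<alpha> i) * (m - xbar_star m \<alpha> n))
      \<longlonglongrightarrow> 1 * \<alpha> i - 1 * (1 - \<alpha> i) * (m - xb)"
    using assms by (intro tendsto_intros)
  then show ?thesis
    by (simp add: x_star_def[abs_def] diff_divide_distrib[symmetric])
qed

lemma tendsto_x_star_alpha_hat:
  assumes "alpha_hat \<alpha> \<longlonglongrightarrow> a" and "a \<noteq> 0"
  shows "x_star m \<alpha> i \<longlonglongrightarrow> \<alpha> i - (1 - \<alpha> i) * (m / a - 1)"
  using tendsto_x_star[OF tendsto_xbar_star[OF assms]]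
  by (simp add: algebra_simps)

lemma tendsto_L_star:
  assumes "alpha_hat \<alpha> \<longlonglongrightarrow> a" and "a \<noteq> 0"
  shows "L_star m \<alpha> i \<longlonglongrightarrow> (1 - \<alpha> i) * (m / a)"
proof -
  have "L_star m \<alpha> i \<longlonglongrightarrow> 1 - (\<alpha> i - (1 - \<alpha> i) * (m / a - 1))"
    unfolding L_star_def[abs_def]
    by (intro tendsto_intros tendsto_x_star_alpha_hat assms)
  then show ?thesis
    by (simp add: algebra_simps)
qed

lemma tendsto_G_star:
  assumes "alpha_hat \<alpha> \<longlonglongrightarrow> a" and "a \<noteq> 0"
  shows "G_star m \<alpha> i \<longlonglongrightarrow> \<alpha> i * (m / a)"
proof -
  have "G_star m \<alpha> i \<longlonglongrightarrow> (\<alpha> i - (1 - \<alpha> i) * (m / a - 1)) + m - (1 - m * (1 / a - 1))"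
    unfolding G_star_def[abs_def]
    by (intro tendsto_intros tendsto_x_star_alpha_hat tendsto_xbar_star assms)
  then show ?thesis
    by (simp add: algebra_simps)
qed

theorem mainTheorem9:
  fixes m a_inf :: real and \<alpha> :: "nat \<Rightarrow> real" and i :: nat
  assumes m: "0 < m" "m < 1"
    and alpha: "\<And>j. j \<ge> 1 \<Longrightarrow> 0 < \<alpha> j \<and> \<alpha> j < 1"
    and lim: "(\<lambda>n. alpha_hat \<alpha> n) \<longlonglongrightarrow> a_inf"
    and pos: "a_inf > 0"
    and i: "i \<ge> 1"
  shows "(\<lambda>n. xbar_star m \<alpha> n) \<longlonglongrightarrow> 1 - m * (1 / a_inf - 1) \<and>
     (\<lambda>n. x_star m \<alpha> i n) \<longlonglongrightarrow> \<alpha> i - (1 - \<alpha> i) * (m / a_inf - 1) \<and>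
     (\<lambda>n. L_star m \<alpha> i n / (1 - \<alpha> i)) \<longlonglongrightarrow> m / a_inf \<and>
     (\<lambda>n. G_star m \<alpha> i n / \<alpha> i) \<longlonglongrightarrow> m / a_inf"
proof -
  have a: "a_inf \<noteq> 0"
    using pos by simp
  have "\<alpha> i \<noteq> 0" "1 - \<alpha> i \<noteq> 0"
    using alpha[OF i] by auto
  moreover have "(\<lambda>n. L_star m \<alpha> i n / (1 - \<alpha> i)) \<longlonglongrightarrow> (1 - \<alpha> i) * (m / a_inf) / (1 - \<alpha> i)"
    using \<open>1 - \<alpha> i \<noteq> 0\<close> by (intro tendsto_divide tendsto_const tendsto_L_star lim a)
  moreover have "(\<lambda>n. G_star m \<alpha> i n / \<alpha> i) \<longlonglongrightarrow> \<alpha> i * (m / a_inf) / \<alpha> i"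
    using \<open>\<alpha> i \<noteq> 0\<close> by (intro tendsto_divide tendsto_const tendsto_G_star lim a)
  ultimately show ?thesis
    using tendsto_xbar_star[OF lim a] tendsto_x_star_alpha_hat[OF lim a] by simp
qed

end
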